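(* Let $K, C\subset\mathbb{R}^n$ be closed, let $\mathcal{P}\subset\partial K\cap\partial C$ be a set such that property (Pr) holds, and let $F:\mathbb{R}^n\rightrightarrows\mathbb{R}^n$ be a continuous set-valued map such that $F(x)\subset T_K(x)$ for all $x\in\partial K\cap\operatorname{int}(C)$. Then, for all $x\in\mathcal{P}$, $F(x)\subset T_K(x)$ and $T^a_{\partial K}(x)=T_{\partial K}(x)$.
   Context: Property (Pr): the map $T_K:\partial K\rightrightarrows\mathbb{R}^n$, $x\mapsto T_K(x)$, is continuous (upper and lower semicontinuous) at every point of $\mathcal{P}$, and for every $x\in\mathcal{P}$ and every neighborhood $\mathcal{N}(x)$ of $x$, $\mathcal{N}(x)\cap\partial K\cap\operatorname{int}(C)\neq\emptyset$. Contingent cone of a set $S$ at $x\in\operatorname{cl}(S)$: $T_S(x)=\{v: \exists t_i\to 0^+, \exists v_i\to v,\ x+t_iv_i\in S\}$. Adjacent cone: $T^a_S(x)=\{v: \forall t_i\to 0^+, \exists v_i\to v,\ x+t_iv_i\in S\}$. *)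

theory Defs
  imports "HOL-Analysis.Analysis"
begin

definition contingent_cone :: "'a::real_normed_vector set \<Rightarrow> 'a \<Rightarrow> 'a set" where
  "contingent_cone S x = {v. \<exists>t::nat \<Rightarrow> real. \<exists>w::nat \<Rightarrow> 'a.
      (\<forall>i. t i > 0) \<and> t \<longlonglongrightarrow> 0 \<and> w \<longlonglongrightarrow> v \<and> (\<forall>i. x + t i *\<^sub>R w i \<in> S)}"

definition adjacent_cone :: "'a::real_normed_vector set \<Rightarrow> 'a \<Rightarrow> 'a set" where
  "adjacent_cone S x = {v. \<forall>t::nat \<Rightarrow> real. ((\<forall>i. t i > 0) \<and> t \<longlonglongrightarrow> 0) \<longrightarrow>
      (\<exists>w::nat \<Rightarrow> 'a. w \<longlonglongrightarrow> v \<and> (\<forall>i. x + t i *\<^sub>R w i \<in> S))}"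

definition usc_at :: "'a::metric_space set \<Rightarrow> ('a \<Rightarrow> 'b::topological_space set) \<Rightarrow> 'a \<Rightarrow> bool" where
  "usc_at D F x \<longleftrightarrow> (\<forall>U. open U \<and> F x \<subseteq> U \<longrightarrow>
      (\<exists>e>0. \<forall>y\<in>D. dist y x < e \<longrightarrow> F y \<subseteq> U))"

definition lsc_at :: "'a::metric_space set \<Rightarrow> ('a \<Rightarrow> 'b::topological_space set) \<Rightarrow> 'a \<Rightarrow> bool" where
  "lsc_at D F x \<longleftrightarrow> (\<forall>V. open V \<and> F x \<inter> V \<noteq> {} \<longrightarrow>
      (\<exists>e>0. \<forall>y\<in>D. dist y x < e \<longrightarrow> F y \<inter> V \<noteq> {}))"

definition property_Pr :: "'a::euclidean_space set \<Rightarrow> 'a set \<Rightarrow> 'a set \<Rightarrow> bool" where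
  "property_Pr K C P \<longleftrightarrow> (\<forall>x\<in>P.
      usc_at (frontier K) (contingent_cone K) x \<and> lsc_at (frontier K) (contingent_cone K) x \<and>
      (\<forall>N. open N \<and> x \<in> N \<longrightarrow> N \<inter> frontier K \<inter> interior C \<noteq> {}))"

end

theory Submission
  imports Defs
begin

text \<open>
  Near a point x of P, the points of frontier K \<inter> interior C accumulate at x, and there
  F y \<subseteq> T_K(y); lower semicontinuity of F and upper semicontinuity of T_K (whose values
  are closed cones) carry this over to the closed cone T_K(x).

  For the cones of the boundary, first v \<in> T_\<partial>K(x) cannot be interior to T_K(x): otherwise,
  by lower semicontinuity, all proximal normals of K at boundary points near x make an
  obtuse angle with v, so the distance to K grows linearly along the ray -v from exterior
  points near x + t w \<in> \<partial>K, which is absurd since that ray passes close to x \<in> K.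
  Hence directions arbitrarily close to v lie outside T_K(x), and by upper semicontinuity
  outside T_K(p) for boundary points p near x, while T_K(p) contains directions close to v
  by lower semicontinuity; the segment between two such directions, scaled by a small
  t, crosses \<partial>K.  So from every boundary point near x one can move along \<partial>K in a
  direction close to v, and a continuous induction gives d(x + s v, \<partial>K) = o(s), that is,
  v \<in> T^a_\<partial>K(x).
\<close>

lemma contingent_cone_iff:
  "v \<in> contingent_cone S x \<longleftrightarrow>
    (\<forall>e>0. \<forall>d>0. \<exists>t w. 0 < t \<and> t < d \<and> dist w v < e \<and> x + t *\<^sub>R w \<in> S)"
proof
  assume "v \<in> contingent_cone S x"
  then obtain t w where t: "\<And>i. t i > 0" "t \<longlonglongrightarrow> 0" and w: "w \<longlonglongrightarrow> v"
    and S: "\<And>i. x + t i *\<^sub>R w i \<in> S"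
    unfolding contingent_cone_def by blast
  show "\<forall>e>0. \<forall>d>0. \<exists>t w. 0 < t \<and> t < d \<and> dist w v < e \<and> x + t *\<^sub>R w \<in> S"
  proof (intro allI impI)
    fix e d :: real
    assume "e > 0" "d > 0"
    then have "\<forall>\<^sub>F i in sequentially. t i < d \<and> dist (w i) v < e"
      using order_tendstoD(2)[OF t(2)] tendstoD[OF w] by (simp add: eventually_conj)
    then obtain i where "t i < d" "dist (w i) v < e"
      using eventually_happens'[OF sequentially_bot] by blast
    then show "\<exists>t w. 0 < t \<and> t < d \<and> dist w v < e \<and> x + t *\<^sub>R w \<in> S"
      using t(1) S by blast
  qed
next
  assume "\<forall>e>0. \<forall>d>0. \<exists>t w. 0 < t \<and> t < d \<and> dist w v < e \<and> x + t *\<^sub>R w \<in> S"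
  then have "\<forall>n::nat. \<exists>t w. 0 < t \<and> t < 1 / Suc n \<and> dist w v < 1 / Suc n \<and> x + t *\<^sub>R w \<in> S"
    by simp
  then obtain t w where tw: "\<And>n. 0 < t n \<and> t n < 1 / Suc n \<and> dist (w n) v < 1 / Suc n \<and> x + t n *\<^sub>R w n \<in> S"
    by metis
  have "norm (t n) < 1 / Suc n" "norm (w n - v) < 1 / Suc n" for n
    using tw[of n] by (simp_all add: dist_norm)
  then have "t \<longlonglongrightarrow> 0" "w \<longlonglongrightarrow> v"
    by (blast intro: LIMSEQ_norm_0 LIM_zero_cancel)+
  with tw show "v \<in> contingent_cone S x"
    unfolding contingent_cone_def by blast
qed

lemma closed_contingent_cone: "closed (contingent_cone S x)"
proof -
  have "v \<in> contingent_cone S x" if v: "v \<in> closure (contingent_cone S x)" for v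
    unfolding contingent_cone_iff
  proof (intro allI impI)
    fix e d :: real
    assume "e > 0" "d > 0"
    then have "e/2 > 0" by simp
    then obtain u where u: "u \<in> contingent_cone S x" "dist u v < e/2"
      using v unfolding closure_approachable by blast
    then obtain t w where "0 < t" "t < d" "dist w u < e/2" "x + t *\<^sub>R w \<in> S"
      using \<open>e/2 > 0\<close> \<open>d > 0\<close> unfolding contingent_cone_iff by blast
    moreover have "dist w v < e"
      using u(2) \<open>dist w u < e/2\<close> dist_triangle[of w v u] by linarith
    ultimately show "\<exists>t w. 0 < t \<and> t < d \<and> dist w v < e \<and> x + t *\<^sub>R w \<in> S"
      by blast
  qed
  then show ?thesis
    using closure_subset_eq by blast
qed

lemma contingent_cone_scaleR:
  assumes "c \<in> contingent_cone S x" "s > 0"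
  shows "s *\<^sub>R c \<in> contingent_cone S x"
proof -
  obtain t w where t: "\<And>i. t i > 0" "t \<longlonglongrightarrow> 0" and w: "w \<longlonglongrightarrow> c"
    and S: "\<And>i. x + t i *\<^sub>R w i \<in> S"
    using assms(1) unfolding contingent_cone_def by blast
  have "x + (t i / s) *\<^sub>R (s *\<^sub>R w i) \<in> S" for i
    using S[of i] \<open>s > 0\<close> by simp
  moreover have "(\<lambda>i. t i / s) \<longlonglongrightarrow> 0" "(\<lambda>i. s *\<^sub>R w i) \<longlonglongrightarrow> s *\<^sub>R c"
    using t(2) w by (auto intro: tendsto_divide_zero tendsto_scaleR)
  moreover have "\<forall>i. t i / s > 0"
    using t(1) \<open>s > 0\<close> by simp
  ultimately show ?thesis
    unfolding contingent_cone_def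
    by (intro CollectI exI[of _ "\<lambda>i. t i / s"] exI[of _ "\<lambda>i. s *\<^sub>R w i"]) blast
qed

lemma contingent_cone_mono: "S \<subseteq> S' \<Longrightarrow> contingent_cone S x \<subseteq> contingent_cone S' x"
  unfolding contingent_cone_def by blast

lemma adjacent_cone_subset_contingent_cone: "adjacent_cone S x \<subseteq> contingent_cone S x"
proof
  fix v
  assume v: "v \<in> adjacent_cone S x"
  define t :: "nat \<Rightarrow> real" where "t = (\<lambda>i. inverse (Suc i))"
  have "\<forall>i. t i > 0" "t \<longlonglongrightarrow> 0"
    unfolding t_def using LIMSEQ_inverse_real_of_nat by auto
  moreover obtain w where "w \<longlonglongrightarrow> v" "\<forall>i. x + t i *\<^sub>R w i \<in> S"
    using v calculation unfolding adjacent_cone_def by blast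
  ultimately show "v \<in> contingent_cone S x"
    unfolding contingent_cone_def by blast
qed

lemma usc_at_cone_valued_eventually_subset:
  fixes G :: "'a::metric_space \<Rightarrow> 'b::real_normed_vector set"
  assumes usc: "usc_at D G x" and "closed (G x)"
    and cone: "\<And>y c s. c \<in> G y \<Longrightarrow> s > 0 \<Longrightarrow> s *\<^sub>R c \<in> G y"
  shows "\<exists>e>0. \<forall>y\<in>D. dist y x < e \<longrightarrow> G y \<subseteq> G x"
proof -
  \<comment> \<open>A fixed neighbourhood of G x suffices: the cone property rescales it to any radius.\<close>
  define U where "U = (\<Union>c\<in>G x. ball c 1)"
  have "open U" "G x \<subseteq> U"
    unfolding U_def by force+
  then obtain e where "e > 0" and e: "\<forall>y\<in>D. dist y x < e \<longrightarrow> G y \<subseteq> U"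
    using usc unfolding usc_at_def by blast
  have "G y \<subseteq> closure (G x)" if y: "y \<in> D" "dist y x < e" for y
  proof
    fix c
    assume c: "c \<in> G y"
    show "c \<in> closure (G x)"
      unfolding closure_approachable
    proof (intro allI impI)
      fix r :: real
      assume "r > 0"
      have "(2 / r) *\<^sub>R c \<in> G y"
        using cone[OF c] \<open>r > 0\<close> by simp
      then have "(2 / r) *\<^sub>R c \<in> U"
        using e y by blast
      then obtain z where z: "z \<in> G x" "dist z ((2 / r) *\<^sub>R c) < 1"
        unfolding U_def by auto
      have "(r / 2) *\<^sub>R z - c = (r / 2) *\<^sub>R (z - (2 / r) *\<^sub>R c)"
        using \<open>r > 0\<close> by (simp add: algebra_simps)
      then have "dist ((r / 2) *\<^sub>R z) c = r / 2 * dist z ((2 / r) *\<^sub>R c)"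
        using \<open>r > 0\<close> by (simp add: dist_norm)
      also have "\<dots> < r"
        using z(2) \<open>r > 0\<close> by simp
      finally show "\<exists>y\<in>G x. dist y c < r"
        using cone[OF z(1)] \<open>r > 0\<close> by (intro bexI[of _ "(r / 2) *\<^sub>R z"]) auto
    qed
  qed
  then show ?thesis
    using \<open>e > 0\<close> \<open>closed (G x)\<close> by (metis closure_closed)
qed

lemma lsc_at_uniform_on_compact:
  fixes G :: "'a::metric_space \<Rightarrow> 'b::metric_space set"
  assumes lsc: "lsc_at D G x" and "compact S" "S \<subseteq> G x" "e > 0"
  shows "\<exists>\<delta>>0. \<forall>p\<in>D. dist p x < \<delta> \<longrightarrow> (\<forall>u\<in>S. \<exists>c\<in>G p. dist c u < e)"
proof -
  have "\<exists>d>0. \<forall>p\<in>D. dist p x < d \<longrightarrow> G p \<inter> ball u (e/2) \<noteq> {}" if "u \<in> S" for u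
    using lsc that \<open>S \<subseteq> G x\<close> \<open>e > 0\<close> unfolding lsc_at_def
    by (metis centre_in_ball disjoint_iff half_gt_zero open_ball subsetD)
  then obtain d where d: "\<And>u. u \<in> S \<Longrightarrow> d u > 0"
    and d_near: "\<And>u p. u \<in> S \<Longrightarrow> p \<in> D \<Longrightarrow> dist p x < d u \<Longrightarrow> G p \<inter> ball u (e/2) \<noteq> {}"
    by metis
  obtain S' where S': "S' \<subseteq> S" "finite S'" "S \<subseteq> (\<Union>u\<in>S'. ball u (e/2))"
    using compactE_image[OF \<open>compact S\<close>, of S "\<lambda>u. ball u (e/2)"] \<open>e > 0\<close> by force
  define \<delta> where "\<delta> = Min (insert 1 (d ` S'))"
  have "\<delta> > 0"
    unfolding \<delta>_def using S' d by (subst Min_gr_iff) auto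
  moreover have "\<exists>c\<in>G p. dist c u < e" if p: "p \<in> D" "dist p x < \<delta>" and "u \<in> S" for p u
  proof -
    obtain u' where u': "u' \<in> S'" "dist u' u < e/2"
      using S'(3) \<open>u \<in> S\<close> by force
    have "\<delta> \<le> d u'"
      unfolding \<delta>_def using u'(1) S'(2) by simp
    then obtain c where "c \<in> G p" "dist u' c < e/2"
      using d_near[of u' p] u'(1) S'(1) p by force
    moreover have "dist c u < e"
      using calculation(2) u'(2) dist_triangle[of c u u'] by (simp add: dist_commute)
    ultimately show ?thesis
      by blast
  qed
  ultimately show ?thesis
    by blast
qed

lemma linear_bound_by_continuous_induction:
  fixes g :: "real \<Rightarrow> real"
  assumes "a \<le> b" "continuous_on {a..b} g"
    and step: "\<And>s. a \<le> s \<Longrightarrow> s < b \<Longrightarrow> g s \<le> g a + M * (s - a) \<Longrightarrow>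
        \<exists>h>0. s + h \<le> b \<and> g (s + h) \<le> g s + M * h"
  shows "g b \<le> g a + M * (b - a)"
proof -
  define S where "S = {s \<in> {a..b}. g s \<le> g a + M * (s - a)}"
  have "continuous_on {a..b} (\<lambda>s. g a + M * (s - a))"
    by (intro continuous_intros)
  then have "closed S"
    unfolding S_def using continuous_on_closed_Collect_le[OF assms(2)] by blast
  moreover have "a \<in> S" "bdd_above S"
    using \<open>a \<le> b\<close> unfolding S_def by (auto intro: bdd_aboveI[of _ b])
  ultimately have sup: "Sup S \<in> S"
    using closed_contains_Sup by blast
  have "Sup S = b"
  proof (rule ccontr)
    assume "Sup S \<noteq> b"
    with sup obtain h where "h > 0" "Sup S + h \<le> b" "g (Sup S + h) \<le> g (Sup S) + M * h"
      using step[of "Sup S"] unfolding S_def by force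
    with sup have "Sup S + h \<in> S"
      unfolding S_def by (auto simp: algebra_simps)
    then show False
      using cSup_upper[OF _ \<open>bdd_above S\<close>] \<open>h > 0\<close> by fastforce
  qed
  with sup show ?thesis
    unfolding S_def by simp
qed

lemma nearest_point_in_frontier:
  fixes K :: "'a::real_normed_vector set"
  assumes "z \<notin> K" "p \<in> K" and nearest: "\<And>y. y \<in> K \<Longrightarrow> dist z p \<le> dist z y"
  shows "p \<in> frontier K"
proof -
  have "p \<notin> interior K"
  proof
    assume "p \<in> interior K"
    then obtain e where "e > 0" "ball p e \<subseteq> K"
      using mem_interior by blast
    have "dist z p > 0"
      using assms(1,2) by auto
    define s where "s = min (1/2) (e / (2 * dist z p))"
    have s: "0 < s" "s < 1"
      using \<open>e > 0\<close> \<open>dist z p > 0\<close> by (auto simp: s_def)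
    define y where "y = p + s *\<^sub>R (z - p)"
    have "dist p y = s * dist z p"
      using s by (simp add: y_def dist_norm dist_commute)
    also have "\<dots> < e"
      using \<open>dist z p > 0\<close> \<open>e > 0\<close> by (simp add: s_def min_def field_simps)
    finally have "y \<in> K"
      using \<open>ball p e \<subseteq> K\<close> by auto
    have "z - y = (1 - s) *\<^sub>R (z - p)"
      by (simp add: y_def algebra_simps)
    then have "dist z y < dist z p"
      using s \<open>dist z p > 0\<close> by (simp add: dist_norm)
    with nearest[OF \<open>y \<in> K\<close>] show False
      by simp
  qed
  then show ?thesis
    using \<open>p \<in> K\<close> closure_subset by (auto simp: frontier_def)
qed

lemma power2_norm_add_scaleR:
  fixes a b :: "'a::real_inner"
  shows "(norm (a + t *\<^sub>R b))\<^sup>2 = (norm a)\<^sup>2 + 2 * t * inner a b + t\<^sup>2 * (norm b)\<^sup>2"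
  unfolding power2_norm_eq_inner
  by (simp add: inner_add_left inner_add_right inner_commute power2_eq_square algebra_simps)

lemma inner_contingent_cone_proximal_normal_nonpos:
  fixes K :: "'a::real_inner set"
  assumes "c \<in> contingent_cone K p" and nearest: "\<And>y. y \<in> K \<Longrightarrow> dist q p \<le> dist q y"
  shows "inner c (q - p) \<le> 0"
proof -
  obtain t w where t: "\<And>i. t i > 0" "t \<longlonglongrightarrow> 0" and w: "w \<longlonglongrightarrow> c"
    and K: "\<And>i. p + t i *\<^sub>R w i \<in> K"
    using assms(1) unfolding contingent_cone_def by blast
  have bound: "inner (w i) (q - p) \<le> t i / 2 * (norm (w i))\<^sup>2" for i
  proof -
    have "(dist q p)\<^sup>2 \<le> (dist q (p + t i *\<^sub>R w i))\<^sup>2"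
      using nearest[OF K] by (simp add: power_mono)
    also have "\<dots> = (dist q p)\<^sup>2 - 2 * t i * inner (w i) (q - p) + (t i)\<^sup>2 * (norm (w i))\<^sup>2"
      using power2_norm_add_scaleR[of "q - p" "- t i" "w i"]
      by (simp add: dist_norm inner_commute algebra_simps)
    finally show ?thesis
      using t(1)[of i] by (simp add: power2_eq_square field_simps)
  qed
  have "(\<lambda>i. inner (w i) (q - p)) \<longlonglongrightarrow> inner c (q - p)"
    using w by (intro tendsto_intros)
  moreover have "(\<lambda>i. t i / 2 * (norm (w i))\<^sup>2) \<longlonglongrightarrow> 0 / 2 * (norm c)\<^sup>2"
    using t(2) w by (intro tendsto_intros) auto
  ultimately show ?thesis
    using tendsto_le[OF sequentially_bot] bound by (metis (mono_tags) always_eventually div_0 mult_zero_left)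
qed

lemma inner_proximal_normal_le:
  fixes K :: "'a::real_inner set"
  assumes nearest: "\<And>y. y \<in> K \<Longrightarrow> dist z p \<le> dist z y" and "r > 0"
    and near: "\<forall>u\<in>sphere v r. \<exists>c\<in>contingent_cone K p. dist c u < r/2"
  shows "inner v (z - p) \<le> - (r/2) * dist z p"
proof (cases "z = p")
  case False
  define n where "n = (1 / dist z p) *\<^sub>R (z - p)"
  have "norm n = 1"
    using False by (simp add: n_def dist_norm)
  then have "inner n n = 1"
    by (metis power2_norm_eq_inner power_one)
  have "v + r *\<^sub>R n \<in> sphere v r"
    using \<open>norm n = 1\<close> \<open>r > 0\<close> by (simp add: dist_norm)
  then obtain c where c: "c \<in> contingent_cone K p" "dist c (v + r *\<^sub>R n) < r/2"
    using near by blast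
  have "inner c n \<le> 0"
    using inner_contingent_cone_proximal_normal_nonpos[OF c(1) nearest]
    by (simp add: n_def divide_nonpos_nonneg)
  moreover have "inner (v + r *\<^sub>R n - c) n \<le> norm (v + r *\<^sub>R n - c)"
    using norm_cauchy_schwarz[of "v + r *\<^sub>R n - c" n] \<open>norm n = 1\<close> by simp
  moreover have "norm (v + r *\<^sub>R n - c) < r/2"
    using c(2) by (simp add: dist_norm norm_minus_commute)
  ultimately have "inner v n \<le> - r/2"
    using \<open>inner n n = 1\<close> by (simp add: inner_diff_left inner_add_left)
  then have "dist z p * inner v n \<le> dist z p * (- r/2)"
    by (intro mult_left_mono) auto
  moreover have "inner v (z - p) = dist z p * inner v n"
    using False by (simp add: n_def)
  ultimately show ?thesis
    by (simp add: algebra_simps)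
qed simp

lemma dist_add_scaleR_le_of_inner_neg:
  fixes z p v :: "'a::real_inner"
  assumes "inner v (z - p) \<le> - (r/2) * dist z p" "h \<ge> 0"
    and "h * (norm v)\<^sup>2 \<le> r * dist z p / 2" "r * h \<le> 4 * dist z p"
  shows "dist (z + h *\<^sub>R v) p \<le> dist z p - r * h / 4"
proof -
  define \<rho> where "\<rho> = dist z p"
  have "(dist (z + h *\<^sub>R v) p)\<^sup>2 = \<rho>\<^sup>2 + 2 * h * inner v (z - p) + h\<^sup>2 * (norm v)\<^sup>2"
    using power2_norm_add_scaleR[of "z - p" h v]
    by (simp add: \<rho>_def dist_norm inner_commute algebra_simps)
  also have "\<dots> \<le> \<rho>\<^sup>2 - h * r * \<rho> + h * (r * \<rho> / 2)"
  proof -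
    have "2 * h * inner v (z - p) \<le> - h * r * \<rho>"
      using mult_left_mono[OF assms(1), of "2 * h"] \<open>h \<ge> 0\<close> by (simp add: \<rho>_def)
    moreover have "h\<^sup>2 * (norm v)\<^sup>2 \<le> h * (r * \<rho> / 2)"
      using mult_left_mono[OF assms(3) \<open>h \<ge> 0\<close>] by (simp add: \<rho>_def power2_eq_square)
    ultimately show ?thesis
      by linarith
  qed
  also have "\<dots> \<le> (\<rho> - r * h / 4)\<^sup>2"
    using \<open>h \<ge> 0\<close> by (simp add: power2_eq_square algebra_simps)
  finally have "(dist (z + h *\<^sub>R v) p)\<^sup>2 \<le> (\<rho> - r * h / 4)\<^sup>2" .
  moreover have "0 \<le> \<rho> - r * h / 4"
    using assms(4) by (simp add: \<rho>_def)
  ultimately show ?thesis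
    unfolding \<rho>_def by (rule power2_le_imp_le)
qed

lemma infdist_increases_against_direction:
  fixes K :: "'a::euclidean_space set"
  assumes "closed K" "K \<noteq> {}" "y \<notin> K" "r > 0" "H > 0"
    and normal: "\<And>h p. 0 < h \<Longrightarrow> h \<le> H \<Longrightarrow> y - h *\<^sub>R v \<notin> K \<Longrightarrow> p \<in> K \<Longrightarrow>
        (\<And>z. z \<in> K \<Longrightarrow> dist (y - h *\<^sub>R v) p \<le> dist (y - h *\<^sub>R v) z) \<Longrightarrow>
        inner v (y - h *\<^sub>R v - p) \<le> - (r/2) * dist (y - h *\<^sub>R v) p"
  obtains h where "0 < h" "h \<le> H" "infdist y K + r/4 * h \<le> infdist (y - h *\<^sub>R v) K"
proof -
  define d where "d = infdist y K"
  have "d > 0"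
    unfolding d_def using infdist_pos_not_in_closed[OF assms(1-3)] .
  \<comment> \<open>Small enough that infdist (y - h v) K \<ge> d/2, and then small enough for
     dist_add_scaleR_le_of_inner_neg at y - h v.\<close>
  define h where "h = Min {H, d / (2 * (norm v + 1)), r * d / (4 * ((norm v)\<^sup>2 + 1)), 2 * d / (r + 1)}"
  have "norm v + 1 > 0" "(norm v)\<^sup>2 + 1 > 0"
    by (simp_all add: add_nonneg_pos)
  then have "h > 0"
    unfolding h_def using \<open>d > 0\<close> \<open>r > 0\<close> \<open>H > 0\<close> by simp
  have "h \<le> H" "h \<le> d / (2 * (norm v + 1))" "h \<le> r * d / (4 * ((norm v)\<^sup>2 + 1))" "h \<le> 2 * d / (r + 1)"
    unfolding h_def by simp_all
  then have h: "h \<le> H" "h * norm v \<le> d / 2" "h * (norm v)\<^sup>2 \<le> r * d / 4" "r * h \<le> 2 * d"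
    using \<open>h > 0\<close> \<open>r > 0\<close> by (simp_all add: field_simps add_pos_nonneg)
  define z where "z = y - h *\<^sub>R v"
  have "d \<le> infdist z K + h * norm v"
    using infdist_triangle[of y K z] \<open>h > 0\<close> by (simp add: d_def z_def)
  with h(2) have d_le: "d \<le> 2 * infdist z K"
    by linarith
  then have "z \<notin> K"
    using \<open>d > 0\<close> by auto
  obtain p where "p \<in> K" "infdist z K = dist z p"
    using infdist_attains_inf[OF \<open>closed K\<close> \<open>K \<noteq> {}\<close>] by blast
  then have nearest: "\<And>w. w \<in> K \<Longrightarrow> dist z p \<le> dist z w"
    by (metis infdist_le)
  have "inner v (z - p) \<le> - (r/2) * dist z p"
    using normal[OF \<open>h > 0\<close> h(1)] \<open>z \<notin> K\<close> \<open>p \<in> K\<close> nearest by (simp add: z_def)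
  moreover have "r * d \<le> r * (2 * dist z p)"
    using d_le \<open>r > 0\<close> \<open>infdist z K = dist z p\<close> by simp
  ultimately have "dist (z + h *\<^sub>R v) p \<le> dist z p - r * h / 4"
    using h(3,4) d_le \<open>h > 0\<close> \<open>infdist z K = dist z p\<close>
    by (intro dist_add_scaleR_le_of_inner_neg) auto
  moreover have "d \<le> dist (z + h *\<^sub>R v) p"
    using infdist_le[OF \<open>p \<in> K\<close>] by (simp add: d_def z_def)
  ultimately show ?thesis
    using that[OF \<open>h > 0\<close> h(1)] \<open>infdist z K = dist z p\<close> by (simp add: d_def z_def)
qed

lemma infdist_grows_along_ray:
  fixes K :: "'a::euclidean_space set"
  assumes "closed K" "K \<noteq> {}" "q \<notin> K" "r > 0" "T \<ge> 0"
    and normal: "\<And>s p. 0 \<le> s \<Longrightarrow> s \<le> T \<Longrightarrow> q - s *\<^sub>R v \<notin> K \<Longrightarrow> p \<in> K \<Longrightarrow>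
        (\<And>y. y \<in> K \<Longrightarrow> dist (q - s *\<^sub>R v) p \<le> dist (q - s *\<^sub>R v) y) \<Longrightarrow>
        inner v (q - s *\<^sub>R v - p) \<le> - (r/2) * dist (q - s *\<^sub>R v) p"
  shows "infdist q K + r/4 * T \<le> infdist (q - T *\<^sub>R v) K"
proof -
  define \<psi> where "\<psi> s = infdist (q - s *\<^sub>R v) K" for s
  have "- \<psi> T \<le> - \<psi> 0 + (- r/4) * (T - 0)"
  proof (rule linear_bound_by_continuous_induction)
    show "continuous_on {0..T} (\<lambda>s. - \<psi> s)"
      unfolding \<psi>_def by (intro continuous_intros)
    fix s
    assume s: "0 \<le> s" "s < T" "- \<psi> s \<le> - \<psi> 0 + (- r/4) * (s - 0)"
    have "\<psi> 0 > 0"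
      unfolding \<psi>_def using infdist_pos_not_in_closed[OF \<open>closed K\<close> \<open>K \<noteq> {}\<close> \<open>q \<notin> K\<close>] by simp
    moreover have "(- r/4) * (s - 0) \<le> 0"
      using s(1) \<open>r > 0\<close> by simp
    ultimately have "q - s *\<^sub>R v \<notin> K"
      using s(3) by (auto simp: \<psi>_def)
    then obtain h where "0 < h" "h \<le> T - s"
      and "infdist (q - s *\<^sub>R v) K + r/4 * h \<le> infdist (q - s *\<^sub>R v - h *\<^sub>R v) K"
    proof (rule infdist_increases_against_direction[OF \<open>closed K\<close> \<open>K \<noteq> {}\<close> _ \<open>r > 0\<close>])
      fix h p
      assume "0 < h" "h \<le> T - s" "q - s *\<^sub>R v - h *\<^sub>R v \<notin> K" "p \<in> K"
        and "\<And>z. z \<in> K \<Longrightarrow> dist (q - s *\<^sub>R v - h *\<^sub>R v) p \<le> dist (q - s *\<^sub>R v - h *\<^sub>R v) z"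
      then show "inner v (q - s *\<^sub>R v - h *\<^sub>R v - p) \<le> - (r/2) * dist (q - s *\<^sub>R v - h *\<^sub>R v) p"
        using normal[of "s + h" p] s(1) by (simp add: algebra_simps)
    qed (use s(2) in simp)
    then show "\<exists>h>0. s + h \<le> T \<and> - \<psi> (s + h) \<le> - \<psi> s + (- r/4) * h"
      by (intro exI[of _ h]) (auto simp: \<psi>_def algebra_simps)
  qed (use \<open>T \<ge> 0\<close> in simp)
  then show ?thesis
    by (simp add: \<psi>_def)
qed

lemma proximal_normals_obtuse_near:
  fixes K :: "'a::euclidean_space set"
  assumes "x \<in> K" and lsc: "lsc_at (frontier K) (contingent_cone K) x"
    and "r > 0" "sphere v r \<subseteq> contingent_cone K x"
  obtains \<delta> where "\<delta> > 0"
    "\<And>z p. z \<notin> K \<Longrightarrow> p \<in> K \<Longrightarrow> (\<And>y. y \<in> K \<Longrightarrow> dist z p \<le> dist z y) \<Longrightarrow>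
      dist z x < \<delta> \<Longrightarrow> inner v (z - p) \<le> - (r/2) * dist z p"
proof -
  obtain \<delta> where "\<delta> > 0"
    and \<delta>: "\<forall>p\<in>frontier K. dist p x < \<delta> \<longrightarrow> (\<forall>u\<in>sphere v r. \<exists>c\<in>contingent_cone K p. dist c u < r/2)"
    using lsc_at_uniform_on_compact[OF lsc compact_sphere assms(4), of "r/2"] \<open>r > 0\<close> by auto
  show ?thesis
  proof (rule that[of "\<delta>/2"])
    fix z p
    assume "z \<notin> K" "p \<in> K" and nearest: "\<And>y. y \<in> K \<Longrightarrow> dist z p \<le> dist z y"
      and "dist z x < \<delta>/2"
    have "p \<in> frontier K"
      using nearest_point_in_frontier[OF \<open>z \<notin> K\<close> \<open>p \<in> K\<close> nearest] .
    moreover have "dist p x < \<delta>"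
      using nearest[OF \<open>x \<in> K\<close>] \<open>dist z x < \<delta>/2\<close> dist_triangle[of p x z]
      by (simp add: dist_commute)
    ultimately show "inner v (z - p) \<le> - (r/2) * dist z p"
      using inner_proximal_normal_le[OF nearest \<open>r > 0\<close>] \<delta> by blast
  qed (use \<open>\<delta> > 0\<close> in simp)
qed

lemma contingent_cone_frontier_exterior_points:
  fixes K :: "'a::real_normed_vector set"
  assumes "v \<in> contingent_cone (frontier K) x" "e > 0" "d > 0"
  obtains t q where "0 < t" "t < d" "q \<notin> K" "dist (q - t *\<^sub>R v) x < t * e"
proof -
  obtain t w where "0 < t" "t < d" "dist w v < e/2" "x + t *\<^sub>R w \<in> frontier K"
    using assms unfolding contingent_cone_iff by (meson half_gt_zero)
  moreover have "t * e/2 > 0"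
    using \<open>0 < t\<close> \<open>e > 0\<close> by simp
  moreover have "x + t *\<^sub>R w \<in> closure (- K)"
    using \<open>x + t *\<^sub>R w \<in> frontier K\<close> by (simp add: frontier_closures)
  ultimately obtain q where "q \<notin> K" "norm (q - (x + t *\<^sub>R w)) < t * e/2"
    unfolding closure_approachable dist_norm by blast
  moreover have "norm (t *\<^sub>R (w - v)) \<le> t * e/2"
    using mult_left_mono[of "norm (w - v)" "e/2" t] \<open>dist w v < e/2\<close> \<open>0 < t\<close>
    by (simp add: dist_norm)
  moreover have "q - t *\<^sub>R v - x = (q - (x + t *\<^sub>R w)) + t *\<^sub>R (w - v)"
    by (simp add: algebra_simps)
  then have "dist (q - t *\<^sub>R v) x \<le> norm (q - (x + t *\<^sub>R w)) + norm (t *\<^sub>R (w - v))"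
    unfolding dist_norm by (metis norm_triangle_ineq)
  ultimately have "dist (q - t *\<^sub>R v) x < t * e"
    by linarith
  with \<open>0 < t\<close> \<open>t < d\<close> \<open>q \<notin> K\<close> show ?thesis
    using that by blast
qed

lemma contingent_cone_frontier_disjoint_interior:
  fixes K :: "'a::euclidean_space set"
  assumes "closed K" "x \<in> frontier K" and lsc: "lsc_at (frontier K) (contingent_cone K) x"
    and v: "v \<in> contingent_cone (frontier K) x"
  shows "v \<notin> interior (contingent_cone K x)"
proof
  assume "v \<in> interior (contingent_cone K x)"
  then obtain r where "r > 0" "cball v r \<subseteq> contingent_cone K x"
    using mem_interior_cball by blast
  then have "sphere v r \<subseteq> contingent_cone K x"
    using sphere_cball by blast
  have "x \<in> K"
    using assms(1,2) frontier_subset_closed by blast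
  obtain \<delta> where "\<delta> > 0" and normal: "\<And>z p. z \<notin> K \<Longrightarrow> p \<in> K \<Longrightarrow>
      (\<And>y. y \<in> K \<Longrightarrow> dist z p \<le> dist z y) \<Longrightarrow> dist z x < \<delta> \<Longrightarrow> inner v (z - p) \<le> - (r/2) * dist z p"
    using proximal_normals_obtuse_near[OF \<open>x \<in> K\<close> lsc \<open>r > 0\<close> \<open>sphere v r \<subseteq> _\<close>] by blast
  have "norm v + r + 1 > 0"
    using \<open>r > 0\<close> by (simp add: add_nonneg_pos)
  then obtain t q where "0 < t" "t < \<delta> / (norm v + r + 1)" "q \<notin> K"
    and close: "dist (q - t *\<^sub>R v) x < t * (r/8)"
    using contingent_cone_frontier_exterior_points[OF v, of "r/8" "\<delta> / (norm v + r + 1)"]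
      \<open>r > 0\<close> \<open>\<delta> > 0\<close> by auto
  \<comment> \<open>The distance to K grows at rate r/4 along the ray from q in direction -v, but
     after time t that ray is within t r/8 of x \<in> K.\<close>
  have near: "dist (q - s *\<^sub>R v) x < \<delta>" if "0 \<le> s" "s \<le> t" for s
  proof -
    have "dist (q - s *\<^sub>R v) x \<le> dist (q - s *\<^sub>R v) (q - t *\<^sub>R v) + dist (q - t *\<^sub>R v) x"
      by (rule dist_triangle)
    also have "\<dots> \<le> t * norm v + t * (r/8)"
    proof -
      have "q - s *\<^sub>R v - (q - t *\<^sub>R v) = (t - s) *\<^sub>R v"
        by (simp add: algebra_simps)
      then have "dist (q - s *\<^sub>R v) (q - t *\<^sub>R v) = (t - s) * norm v"
        using that by (simp add: dist_norm)
      moreover have "(t - s) * norm v \<le> t * norm v"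
        using that by (simp add: mult_right_mono)
      ultimately show ?thesis
        using close by linarith
    qed
    also have "\<dots> < t * (norm v + r + 1)"
      using mult_pos_pos[OF \<open>0 < t\<close> \<open>r > 0\<close>] \<open>0 < t\<close> by (simp add: algebra_simps)
    also have "\<dots> < \<delta>"
      using \<open>t < \<delta> / (norm v + r + 1)\<close> \<open>norm v + r + 1 > 0\<close> by (simp add: pos_less_divide_eq)
    finally show ?thesis .
  qed
  have "infdist q K + r/4 * t \<le> infdist (q - t *\<^sub>R v) K"
  proof (rule infdist_grows_along_ray)
    fix s p
    assume "0 \<le> s" "s \<le> t" "q - s *\<^sub>R v \<notin> K" "p \<in> K"
      and nearest: "\<And>y. y \<in> K \<Longrightarrow> dist (q - s *\<^sub>R v) p \<le> dist (q - s *\<^sub>R v) y"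
    then show "inner v (q - s *\<^sub>R v - p) \<le> - (r/2) * dist (q - s *\<^sub>R v) p"
      using normal[OF _ _ nearest near] by blast
  qed (use \<open>closed K\<close> \<open>x \<in> K\<close> \<open>q \<notin> K\<close> \<open>r > 0\<close> \<open>0 < t\<close> in auto)
  also have "\<dots> \<le> dist (q - t *\<^sub>R v) x"
    using infdist_le[OF \<open>x \<in> K\<close>] .
  finally show False
    using close infdist_nonneg[of q K] mult_pos_pos[OF \<open>r > 0\<close> \<open>0 < t\<close>] by (simp add: algebra_simps)
qed

lemma frontier_meets_scaled_segment:
  fixes K :: "'a::real_normed_vector set"
  assumes "p + t *\<^sub>R a \<in> K" "p + t *\<^sub>R b \<notin> K"
  obtains u where "u \<in> closed_segment a b" "p + t *\<^sub>R u \<in> frontier K"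
proof -
  let ?f = "\<lambda>u. p + t *\<^sub>R u"
  have "connected (?f ` closed_segment a b)"
    by (intro connected_continuous_image continuous_intros connected_segment)
  moreover have "?f ` closed_segment a b \<inter> K \<noteq> {}" "?f ` closed_segment a b - K \<noteq> {}"
    using assms ends_in_segment[of a b] by blast+
  ultimately have "?f ` closed_segment a b \<inter> frontier K \<noteq> {}"
    by (rule connected_Int_frontier)
  then show ?thesis
    using that by blast
qed

lemma frontier_reachable_near_contingent_direction:
  fixes K :: "'a::euclidean_space set"
  assumes "closed K" "x \<in> frontier K"
    and usc: "usc_at (frontier K) (contingent_cone K) x"
    and lsc: "lsc_at (frontier K) (contingent_cone K) x"
    and v: "v \<in> contingent_cone (frontier K) x" and "e > 0"
  obtains \<delta> where "\<delta> > 0"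
    "\<And>p \<eta>. p \<in> frontier K \<Longrightarrow> dist p x < \<delta> \<Longrightarrow> \<eta> > 0 \<Longrightarrow>
      \<exists>h u. 0 < h \<and> h < \<eta> \<and> dist u v < e \<and> p + h *\<^sub>R u \<in> frontier K"
proof -
  have "v \<in> contingent_cone K x"
    using v contingent_cone_mono[OF frontier_subset_closed[OF \<open>closed K\<close>]] by blast
  have "v \<in> closure (- contingent_cone K x)"
    using contingent_cone_frontier_disjoint_interior[OF assms(1,2) lsc v]
    by (simp add: closure_complement)
  then obtain c' where c': "c' \<notin> contingent_cone K x" "c' \<in> ball v e"
    using \<open>e > 0\<close> unfolding closure_approachable by (auto simp: dist_commute)
  obtain e1 where "e1 > 0"
    and e1: "\<forall>y\<in>frontier K. dist y x < e1 \<longrightarrow> contingent_cone K y \<subseteq> contingent_cone K x"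
    using usc_at_cone_valued_eventually_subset[OF usc closed_contingent_cone contingent_cone_scaleR]
    by blast
  obtain e2 where "e2 > 0"
    and e2: "\<forall>y\<in>frontier K. dist y x < e2 \<longrightarrow> contingent_cone K y \<inter> ball v e \<noteq> {}"
    using lsc \<open>v \<in> contingent_cone K x\<close> \<open>e > 0\<close> unfolding lsc_at_def
    by (metis centre_in_ball disjoint_iff open_ball)
  show ?thesis
  proof (rule that[of "min e1 e2"])
    fix p and \<eta> :: real
    assume p: "p \<in> frontier K" "dist p x < min e1 e2" and "\<eta> > 0"
    have "contingent_cone K p \<inter> ball v e \<noteq> {}"
      using e2 p by simp
    then obtain c where c: "c \<in> contingent_cone K p" "c \<in> ball v e"
      by blast
    obtain r where "r > 0" "ball c r \<subseteq> ball v e"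
      using c(2) open_ball openE by blast
    have "c' \<notin> contingent_cone K p"
      using c'(1) e1 p by auto
    then obtain ee dd where "ee > 0" "dd > 0"
      and outside: "\<And>t w. 0 < t \<Longrightarrow> t < dd \<Longrightarrow> dist w c' < ee \<Longrightarrow> p + t *\<^sub>R w \<notin> K"
      unfolding contingent_cone_iff by blast
    have "min \<eta> dd > 0"
      using \<open>\<eta> > 0\<close> \<open>dd > 0\<close> by simp
    then obtain t w where "0 < t" "t < min \<eta> dd" "dist w c < r" and inside: "p + t *\<^sub>R w \<in> K"
      using c(1) \<open>r > 0\<close> unfolding contingent_cone_iff by blast
    have "p + t *\<^sub>R c' \<notin> K"
      using outside \<open>0 < t\<close> \<open>t < min \<eta> dd\<close> \<open>ee > 0\<close> by simp
    then obtain u where u: "u \<in> closed_segment w c'" "p + t *\<^sub>R u \<in> frontier K"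
      by (rule frontier_meets_scaled_segment[OF inside])
    have "w \<in> ball v e"
      using \<open>dist w c < r\<close> \<open>ball c r \<subseteq> ball v e\<close> by (auto simp: dist_commute)
    then have "u \<in> ball v e"
      using closed_segment_subset[OF _ c'(2) convex_ball] u(1) by blast
    then show "\<exists>h u. 0 < h \<and> h < \<eta> \<and> dist u v < e \<and> p + h *\<^sub>R u \<in> frontier K"
      using u(2) \<open>0 < t\<close> \<open>t < min \<eta> dd\<close> by (auto simp: dist_commute)
  qed (use \<open>e1 > 0\<close> \<open>e2 > 0\<close> in simp)
qed

lemma infdist_add_scaleR_le:
  fixes z v u :: "'a::real_normed_vector"
  assumes "p + h *\<^sub>R u \<in> S" "h \<ge> 0"
  shows "infdist (z + h *\<^sub>R v) S \<le> dist z p + h * dist u v"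
proof -
  have "infdist (z + h *\<^sub>R v) S \<le> dist (z + h *\<^sub>R v) (p + h *\<^sub>R u)"
    by (rule infdist_le[OF assms(1)])
  also have "\<dots> = norm ((z - p) + h *\<^sub>R (v - u))"
    unfolding dist_norm by (rule arg_cong[where f = norm]) (simp add: algebra_simps)
  also have "\<dots> \<le> dist z p + h * dist u v"
    using norm_triangle_ineq[of "z - p" "h *\<^sub>R (v - u)"] \<open>h \<ge> 0\<close>
    by (simp add: dist_norm norm_minus_commute)
  finally show ?thesis .
qed

lemma infdist_ray_eventually_le:
  fixes S :: "'a::euclidean_space set"
  assumes "closed S" "x \<in> S" "\<delta> > 0"
    and reach: "\<And>p \<eta>. p \<in> S \<Longrightarrow> dist p x < \<delta> \<Longrightarrow> \<eta> > 0 \<Longrightarrow>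
      \<exists>h u. 0 < h \<and> h < \<eta> \<and> dist u v < e \<and> p + h *\<^sub>R u \<in> S"
  shows "\<forall>\<^sub>F s in at_right 0. infdist (x + s *\<^sub>R v) S \<le> e * s"
  unfolding eventually_at_right_field
proof (intro exI conjI allI impI)
  have "2 * norm v + 1 > 0"
    by (simp add: add_nonneg_pos)
  then show "\<delta> / (2 * norm v + 1) > 0"
    using \<open>\<delta> > 0\<close> by simp
  fix s :: real
  assume "s > 0" "s < \<delta> / (2 * norm v + 1)"
  define g where "g \<sigma> = infdist (x + \<sigma> *\<^sub>R v) S" for \<sigma>
  have "g s \<le> g 0 + e * (s - 0)"
  proof (rule linear_bound_by_continuous_induction)
    show "continuous_on {0..s} g"
      unfolding g_def by (intro continuous_intros)
    fix \<sigma>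
    assume \<sigma>: "0 \<le> \<sigma>" "\<sigma> < s"
    obtain p where "p \<in> S" and p: "g \<sigma> = dist (x + \<sigma> *\<^sub>R v) p"
      using infdist_attains_inf[OF \<open>closed S\<close>] \<open>x \<in> S\<close> unfolding g_def by blast
    have "dist p x \<le> dist (x + \<sigma> *\<^sub>R v) p + dist (x + \<sigma> *\<^sub>R v) x"
      using dist_triangle[of p x "x + \<sigma> *\<^sub>R v"] by (simp add: dist_commute)
    also have "\<dots> \<le> 2 * norm v * \<sigma>"
      using p infdist_le[OF \<open>x \<in> S\<close>, of "x + \<sigma> *\<^sub>R v"] \<sigma>(1) by (simp add: g_def dist_norm)
    also have "\<dots> \<le> 2 * norm v * s"
      using \<sigma> by (intro mult_left_mono) auto
    also have "\<dots> < \<delta>"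
      using \<open>s < \<delta> / (2 * norm v + 1)\<close> \<open>2 * norm v + 1 > 0\<close> \<open>s > 0\<close>
      by (simp add: pos_less_divide_eq algebra_simps)
    finally obtain h u where h: "0 < h" "h < s - \<sigma>" "dist u v < e" "p + h *\<^sub>R u \<in> S"
      using reach[OF \<open>p \<in> S\<close>, of "s - \<sigma>"] \<sigma>(2) by auto
    have "g (\<sigma> + h) \<le> g \<sigma> + h * dist u v"
      using infdist_add_scaleR_le[OF h(4), of "x + \<sigma> *\<^sub>R v" v] h(1) p
      by (simp add: g_def algebra_simps)
    also have "\<dots> \<le> g \<sigma> + e * h"
      using h(1,3) by (simp add: mult.commute mult_left_mono)
    finally show "\<exists>h>0. \<sigma> + h \<le> s \<and> g (\<sigma> + h) \<le> g \<sigma> + e * h"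
      using h(1,2) by (intro exI[of _ h]) auto
  qed (use \<open>s > 0\<close> in simp)
  then show "infdist (x + s *\<^sub>R v) S \<le> e * s"
    using \<open>x \<in> S\<close> by (simp add: g_def)
qed

lemma adjacent_coneI_infdist:
  fixes S :: "'a::euclidean_space set"
  assumes "closed S" "S \<noteq> {}"
    and small: "\<And>e. e > 0 \<Longrightarrow> \<forall>\<^sub>F s in at_right 0. infdist (x + s *\<^sub>R v) S \<le> e * s"
  shows "v \<in> adjacent_cone S x"
  unfolding adjacent_cone_def
proof (intro CollectI allI impI)
  fix t :: "nat \<Rightarrow> real"
  assume t: "(\<forall>i. 0 < t i) \<and> t \<longlonglongrightarrow> 0"
  have "\<forall>i. \<exists>p. p \<in> S \<and> infdist (x + t i *\<^sub>R v) S = dist (x + t i *\<^sub>R v) p"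
    using infdist_attains_inf[OF assms(1,2)] by metis
  then obtain P where P: "\<And>i. P i \<in> S \<and> infdist (x + t i *\<^sub>R v) S = dist (x + t i *\<^sub>R v) (P i)"
    by metis
  define w where "w i = (1 / t i) *\<^sub>R (P i - x)" for i
  have t_pos: "t i > 0" for i
    using t by blast
  have "x + t i *\<^sub>R w i = P i" for i
    using t_pos[of i] by (simp add: w_def)
  moreover have "w \<longlonglongrightarrow> v"
  proof (rule tendstoI)
    fix e :: real
    assume "e > 0"
    have "filterlim t (at_right 0) sequentially"
      using t t_pos by (intro tendsto_imp_filterlim_at_right) (auto intro: always_eventually)
    moreover have "e/2 > 0"
      using \<open>e > 0\<close> by simp
    ultimately have "\<forall>\<^sub>F i in sequentially. infdist (x + t i *\<^sub>R v) S \<le> e/2 * t i"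
      using eventually_compose_filterlim[OF small] by blast
    then show "\<forall>\<^sub>F i in sequentially. dist (w i) v < e"
    proof (rule eventually_mono)
      fix i
      assume "infdist (x + t i *\<^sub>R v) S \<le> e/2 * t i"
      moreover have "w i - v = (1 / t i) *\<^sub>R (P i - (x + t i *\<^sub>R v))"
        using t_pos[of i] by (simp add: w_def algebra_simps)
      then have "dist (w i) v = infdist (x + t i *\<^sub>R v) S / t i"
        using t_pos[of i] P[of i] by (simp add: dist_norm norm_minus_commute)
      ultimately show "dist (w i) v < e"
        using t_pos[of i] mult_pos_pos[OF \<open>e > 0\<close> t_pos[of i]] by (simp add: pos_divide_less_eq)
    qed
  qed
  ultimately show "\<exists>w. w \<longlonglongrightarrow> v \<and> (\<forall>i. x + t i *\<^sub>R w i \<in> S)"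
    using P by auto
qed

lemma adjacent_cone_frontier_eq_contingent_cone:
  fixes K :: "'a::euclidean_space set"
  assumes "closed K" "x \<in> frontier K"
    and "usc_at (frontier K) (contingent_cone K) x" "lsc_at (frontier K) (contingent_cone K) x"
  shows "adjacent_cone (frontier K) x = contingent_cone (frontier K) x"
proof
  show "contingent_cone (frontier K) x \<subseteq> adjacent_cone (frontier K) x"
  proof
    fix v
    assume v: "v \<in> contingent_cone (frontier K) x"
    have small: "\<forall>\<^sub>F s in at_right 0. infdist (x + s *\<^sub>R v) (frontier K) \<le> e * s"
      if "e > 0" for e
    proof -
      obtain \<delta> where "\<delta> > 0" and reach: "\<And>p \<eta>. p \<in> frontier K \<Longrightarrow> dist p x < \<delta> \<Longrightarrow> \<eta> > 0 \<Longrightarrow>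
          \<exists>h u. 0 < h \<and> h < \<eta> \<and> dist u v < e \<and> p + h *\<^sub>R u \<in> frontier K"
        using frontier_reachable_near_contingent_direction[OF assms v \<open>e > 0\<close>] by blast
      show ?thesis
        by (rule infdist_ray_eventually_le[OF frontier_closed \<open>x \<in> frontier K\<close> \<open>\<delta> > 0\<close> reach])
    qed
    show "v \<in> adjacent_cone (frontier K) x"
      using \<open>x \<in> frontier K\<close> by (intro adjacent_coneI_infdist[OF frontier_closed _ small]) auto
  qed
qed (rule adjacent_cone_subset_contingent_cone)

lemma subset_contingent_cone_at_closure_point:
  fixes K :: "'a::real_normed_vector set"
  assumes usc: "usc_at D (contingent_cone K) x" and lsc: "lsc_at UNIV F x"
    and "x \<in> closure A" "A \<subseteq> D" and sub: "\<And>y. y \<in> A \<Longrightarrow> F y \<subseteq> contingent_cone K y"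
  shows "F x \<subseteq> contingent_cone K x"
proof
  fix v
  assume "v \<in> F x"
  obtain e1 where "e1 > 0"
    and e1: "\<forall>y\<in>D. dist y x < e1 \<longrightarrow> contingent_cone K y \<subseteq> contingent_cone K x"
    using usc_at_cone_valued_eventually_subset[OF usc closed_contingent_cone contingent_cone_scaleR]
    by blast
  have "v \<in> closure (contingent_cone K x)"
    unfolding closure_approachable
  proof (intro allI impI)
    fix e :: real
    assume "e > 0"
    then obtain e2 where "e2 > 0" and e2: "\<forall>y. dist y x < e2 \<longrightarrow> F y \<inter> ball v e \<noteq> {}"
      using lsc \<open>v \<in> F x\<close> unfolding lsc_at_def by (metis UNIV_I centre_in_ball disjoint_iff open_ball)
    obtain y where "y \<in> A" "dist y x < min e1 e2"
      using \<open>x \<in> closure A\<close> \<open>e1 > 0\<close> \<open>e2 > 0\<close> unfolding closure_approachable by (meson min_less_iff_conj)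
    then have "F y \<inter> ball v e \<noteq> {}"
      using e2 by simp
    then obtain c where "c \<in> F y" "c \<in> ball v e"
      by blast
    have "c \<in> contingent_cone K x"
      using sub[OF \<open>y \<in> A\<close>] e1 \<open>A \<subseteq> D\<close> \<open>y \<in> A\<close> \<open>dist y x < min e1 e2\<close> \<open>c \<in> F y\<close> by auto
    with \<open>c \<in> ball v e\<close> show "\<exists>c\<in>contingent_cone K x. dist c v < e"
      by (auto simp: dist_commute)
  qed
  then show "v \<in> contingent_cone K x"
    by (simp add: closed_contingent_cone)
qed

theorem proposition1:
  fixes K C P :: "'a::euclidean_space set" and F :: "'a \<Rightarrow> 'a set"
  assumes "closed K" and "closed C"
    and "P \<subseteq> frontier K \<inter> frontier C"
    and "property_Pr K C P"
    and "\<forall>x. usc_at UNIV F x \<and> lsc_at UNIV F x"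
    and "\<forall>x\<in>frontier K \<inter> interior C. F x \<subseteq> contingent_cone K x"
  shows "\<forall>x\<in>P. F x \<subseteq> contingent_cone K x \<and>
           adjacent_cone (frontier K) x = contingent_cone (frontier K) x"
proof (intro ballI conjI)
  fix x
  assume "x \<in> P"
  then have x: "x \<in> frontier K"
    and usc: "usc_at (frontier K) (contingent_cone K) x"
    and lsc: "lsc_at (frontier K) (contingent_cone K) x"
    and dense: "\<forall>N. open N \<and> x \<in> N \<longrightarrow> N \<inter> frontier K \<inter> interior C \<noteq> {}"
    using assms(3,4) unfolding property_Pr_def by blast+
  have "\<exists>y\<in>frontier K \<inter> interior C. dist y x < e" if "e > 0" for e
    using dense[rule_format, of "ball x e"] that by (auto simp: dist_commute)
  then have "x \<in> closure (frontier K \<inter> interior C)"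
    unfolding closure_approachable by blast
  then show "F x \<subseteq> contingent_cone K x"
    using subset_contingent_cone_at_closure_point[OF usc] assms(5,6) by blast
  show "adjacent_cone (frontier K) x = contingent_cone (frontier K) x"
    using adjacent_cone_frontier_eq_contingent_cone[OF assms(1) x usc lsc] .
qed

end
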